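(* Let $d\in\mathbb{Z}^+$, let $A,C_0\subseteq\mathbb{R}^2$ and $B_0\subseteq A\setminus C_0$. Let $B\subseteq A$ with $|B|=\binom{d+2}{2}-3$ satisfy: (i) $\dim\psi_d(B)=\binom{d+2}{2}-4$; (ii) $B\supseteq B_0$; (iii) $B\cap C_0=B\setminus B_0$; (iv) for all $(e,D)\in I(B,C_0)$, $\max\{\tau_e(B,D),\mu_e(B,D)\}<\binom{d+2}{2}$; (v) for all $(e,D)\in(\{1,\dots,d-1\}\times\mathcal{P}(B))\setminus I(B,C_0)$ with $\alpha_e(D)\ge0$, we have $\gamma_e(B,D)<\binom{d+2}{2}-\binom{d-e+2}{2}$ and $\beta_e(B,D)<0$. Then $B\in\mathcal{N}_d(A,B_0,C_0)$.
   Context: For $k\in\mathbb{Z}^+$, a curve of degree $k$ is the zero set in $\mathbb{R}^2$ of a polynomial in $\mathbb{R}[x,y]$ of degree exactly $k$; $\mathcal{C}_k$ is the family of such curves. For $k\in\mathbb{Z}^+$ let $I_k=\{(i,j)\in\mathbb{Z}_{\ge 0}^2: 1\le i+j\le k\}$ and $\psi_k:\mathbb{R}^2\to\mathbb{R}^{\binom{k+2}{2}-1}$, $\psi_k(a_1,a_2)=(a_1^ia_2^j)_{(i,j)\in I_k}$. $\mathrm{Fl}(S)$ is the affine hull of $S$ ($\mathrm{Fl}(\emptyset)=\emptyset$); $\dim S:=\dim\mathrm{Fl}(S)$, $\dim\emptyset=-1$. $\mathcal{P}(X)$ is the power set. With $d$ fixed, for $e\in\{1,\dots,d-1\}$, finite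 $B\subseteq\mathbb{R}^2$ and $D\subseteq B$: $V_e(D):=\mathrm{Fl}(\psi_e(D))$; $V_d(B):=\mathrm{Fl}(\psi_d(B))$; $W_e(B,D):=\mathrm{Fl}\big(\psi_{d-e}(B\setminus\psi_e^{-1}(V_e(D)))\big)$; $\alpha_e(D):=\binom{e+2}{2}-2-\dim V_e(D)$; $\beta_e(B,D):=\binom{d-e+2}{2}-3-\dim W_e(B,D)$; $\gamma_e(B,D):=|V_e(D)\cap\psi_e(B)|$; $\mu_e(B,D):=0$ if $\alpha_e(D)<0$, else $\mu_e(B,D):=\alpha_e(D)+\gamma_e(B,D)+\binom{d-e+2}{2}$; $\tau_e(B,D):=0$ if $\min\{\alpha_e(D),\beta_e(B,D)\}<0$ or $\gamma_e(B,D)>\binom{d+2}{2}-\binom{d-e+2}{2}-1$; $:=\alpha_e(D)+\beta_e(B,D)+|B|+2$ if $\min\{\alpha_e(D),\beta_e(B,D)\}\ge0$ and $\gamma_e(B,D)=\binom{d+2}{2}-\binom{d-e+2}{2}-1$; $:=\alpha_e(D)+\beta_e(B,D)+|B|+3$ if $\min\{\alpha_e(D),\beta_e(B,D)\}\ge0$ and $\gamma_e(B,D)<\binom{d+2}{2}-\binom{d-e+2}{2}-1$; $U_e(B,D):=\psi_d^{-1}(V_d(B))$ if $\alpha_e(D)<0$; $:=\psi_d^{-1}(V_d(B))\cup\psi_e^{-1}(V_e(D))$ if $\beta_e(B,D)<0\le\alpha_e(D)$; $:=\psi_d^{-1}(V_d(B))\cup\psi_e^{-1}(V_e(D))\cup\psi_{d-e}^{-1}(W_e(B,D))$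 if $\alpha_e(D),\beta_e(B,D)\ge0$; $I(B,C):=\{(f,E)\in\{1,\dots,d-1\}\times\mathcal{P}(B): C\not\subseteq U_f(B,E)\}$. $\mathcal{N}_d(A)$ is the family of $B\subseteq A$ with $|B|=\binom{d+2}{2}-3$ such that: (a) $\dim\psi_d(B)=\binom{d+2}{2}-4$; (b) for all $e\in\{1,\dots,d-1\}$ and $C\in\mathcal{C}_e$, $|B\cap C|<\binom{d+2}{2}-\binom{d-e+2}{2}$; (c) for all $e\in\{1,\dots,d-1\}$ and $C\in\mathcal{C}_e$ with $|B\cap C|=\binom{d+2}{2}-\binom{d-e+2}{2}-1$, $\dim\psi_{d-e}(B\setminus C)=\binom{d-e+2}{2}-3$; (d) for all $e\in\{1,\dots,d-1\}$ and $C\in\mathcal{C}_e$ with $|B\cap C|<\binom{d+2}{2}-\binom{d-e+2}{2}-1$, $\dim\psi_{d-e}(B\setminus C)>\binom{d-e+2}{2}-3$. Finally $\mathcal{N}_d(A,B_0,C_0):=\{E\in\mathcal{N}_d(A): B_0\subseteq E\text{ and }E\cap C_0=E\setminus B_0\}$. *)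

theory Defs
  imports "HOL-Analysis.Analysis" "HOL-Library.Function_Algebras"
begin

text \<open>We regard R^N (N = (k+2 choose 2) - 1) as the space of functions
  nat \<times> nat \<Rightarrow> real supported on I_k.  To use the library notions of affine
  hull and dimension we equip functions with the pointwise real vector space
  structure.\<close>

instantiation "fun" :: (type, real_vector) real_vector
begin
definition scaleR_fun :: "real \<Rightarrow> ('a \<Rightarrow> 'b) \<Rightarrow> 'a \<Rightarrow> 'b"
  where "scaleR_fun r f = (\<lambda>x. r *\<^sub>R f x)"
instance
  by standard (auto simp: scaleR_fun_def fun_eq_iff scaleR_add_right scaleR_add_left)
end

type_synonym point = "real \<times> real"
type_synonym coords = "nat \<times> nat \<Rightarrow> real"

definition Iset :: "nat \<Rightarrow> (nat \<times> nat) set" where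
  "Iset k = {(i, j). 1 \<le> i + j \<and> i + j \<le> k}"

definition psi :: "nat \<Rightarrow> point \<Rightarrow> coords" where
  "psi k a = (\<lambda>(i, j). if (i, j) \<in> Iset k then fst a ^ i * snd a ^ j else 0)"

definition psi_pre :: "nat \<Rightarrow> coords set \<Rightarrow> point set" where
  "psi_pre k V = {a. psi k a \<in> V}"

definition Fl :: "coords set \<Rightarrow> coords set" where
  "Fl S = affine hull S"

definition fdim :: "coords set \<Rightarrow> int" where
  "fdim S = (if Fl S = {} then -1
             else int (dim {x - y | x y. x \<in> Fl S \<and> y \<in> Fl S}))"

definition curve_of_degree :: "nat \<Rightarrow> point set \<Rightarrow> bool" where
  "curve_of_degree k C \<longleftrightarrow>
     (\<exists>c :: nat \<times> nat \<Rightarrow> real.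
        (\<forall>i j. c (i, j) \<noteq> 0 \<longrightarrow> i + j \<le> k) \<and>
        (\<exists>i j. i + j = k \<and> c (i, j) \<noteq> 0) \<and>
        C = {p. (\<Sum>(i, j)\<in>{(i, j). i + j \<le> k}. c (i, j) * fst p ^ i * snd p ^ j) = 0})"

definition bin2 :: "nat \<Rightarrow> int" where
  "bin2 k = int ((k + 2) choose 2)"

definition Ve :: "nat \<Rightarrow> point set \<Rightarrow> coords set" where
  "Ve e D = Fl (psi e ` D)"

definition Vd :: "nat \<Rightarrow> point set \<Rightarrow> coords set" where
  "Vd d B = Fl (psi d ` B)"

definition We :: "nat \<Rightarrow> nat \<Rightarrow> point set \<Rightarrow> point set \<Rightarrow> coords set" where
  "We d e B D = Fl (psi (d - e) ` (B - psi_pre e (Ve e D)))"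

definition alpha :: "nat \<Rightarrow> point set \<Rightarrow> int" where
  "alpha e D = bin2 e - 2 - fdim (psi e ` D)"

definition beta :: "nat \<Rightarrow> nat \<Rightarrow> point set \<Rightarrow> point set \<Rightarrow> int" where
  "beta d e B D = bin2 (d - e) - 3 - fdim (We d e B D)"

definition gamma :: "nat \<Rightarrow> point set \<Rightarrow> point set \<Rightarrow> nat" where
  "gamma e B D = card (Ve e D \<inter> psi e ` B)"

definition mu :: "nat \<Rightarrow> nat \<Rightarrow> point set \<Rightarrow> point set \<Rightarrow> int" where
  "mu d e B D = (if alpha e D < 0 then 0
                 else alpha e D + int (gamma e B D) + bin2 (d - e))"

definition tau :: "nat \<Rightarrow> nat \<Rightarrow> point set \<Rightarrow> point set \<Rightarrow> int" where
  "tau d e B D =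
     (if min (alpha e D) (beta d e B D) < 0 \<or> int (gamma e B D) > bin2 d - bin2 (d - e) - 1 then 0
      else if int (gamma e B D) = bin2 d - bin2 (d - e) - 1
        then alpha e D + beta d e B D + int (card B) + 2
      else alpha e D + beta d e B D + int (card B) + 3)"

definition U :: "nat \<Rightarrow> nat \<Rightarrow> point set \<Rightarrow> point set \<Rightarrow> point set" where
  "U d e B D =
     (if alpha e D < 0 then psi_pre d (Vd d B)
      else if beta d e B D < 0 then psi_pre d (Vd d B) \<union> psi_pre e (Ve e D)
      else psi_pre d (Vd d B) \<union> psi_pre e (Ve e D) \<union> psi_pre (d - e) (We d e B D))"

definition Iidx :: "nat \<Rightarrow> point set \<Rightarrow> point set \<Rightarrow> (nat \<times> point set) set" where
  "Iidx d B C = {(f, E). f \<in> {1..d-1} \<and> E \<in> Pow B \<and> \<not> C \<subseteq> U d f B E}"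

definition Nd :: "nat \<Rightarrow> point set \<Rightarrow> point set set" where
  "Nd d A = {B. B \<subseteq> A \<and> finite B \<and> int (card B) = bin2 d - 3 \<and>
     fdim (psi d ` B) = bin2 d - 4 \<and>
     (\<forall>e\<in>{1..d-1}. \<forall>C. curve_of_degree e C \<longrightarrow>
        int (card (B \<inter> C)) < bin2 d - bin2 (d - e)) \<and>
     (\<forall>e\<in>{1..d-1}. \<forall>C. curve_of_degree e C \<longrightarrow>
        int (card (B \<inter> C)) = bin2 d - bin2 (d - e) - 1 \<longrightarrow>
        fdim (psi (d - e) ` (B - C)) = bin2 (d - e) - 3) \<and>
     (\<forall>e\<in>{1..d-1}. \<forall>C. curve_of_degree e C \<longrightarrow>
        int (card (B \<inter> C)) < bin2 d - bin2 (d - e) - 1 \<longrightarrow>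
        fdim (psi (d - e) ` (B - C)) > bin2 (d - e) - 3)}"

definition Nd3 :: "nat \<Rightarrow> point set \<Rightarrow> point set \<Rightarrow> point set \<Rightarrow> point set set" where
  "Nd3 d A B0 C0 = {E \<in> Nd d A. B0 \<subseteq> E \<and> E \<inter> C0 = E - B0}"

end

theory Submission imports Defs begin

text \<open>Let C be a curve of degree e and D = B \<inter> C. The polynomial defining C is an affine
  function of the coordinates psi_e, so C is the psi_e-preimage of an affine hyperplane H that
  does not contain the whole coordinate space. Hence V_e(D) \<subseteq> H, which gives
  V_e(D) \<inter> psi_e(B) = psi_e(B \<inter> C), B - psi_e^{-1}(V_e(D)) = B - C and alpha_e(D) \<ge> 0.
  So gamma_e(B,D) = |B \<inter> C| and W_e(B,D) = Fl(psi_{d-e}(B - C)), and hypotheses (iv), (v)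
  become statements about |B \<inter> C| and dim psi_{d-e}(B - C): mu gives the bound (b), and tau
  forces either beta < 0 or |B \<inter> C| = binom(d+2,2) - binom(d-e+2,2) - 1 with beta = 0.
  The trivial bound dim psi_{d-e}(B - C) \<le> |B - C| - 1 excludes the remaining mixed case.\<close>

lemma fdim_Fl: "fdim (Fl S) = fdim S"
  by (simp add: fdim_def Fl_def hull_hull)

lemma direction_Fl_eq_span:
  assumes "a \<in> S"
  shows "{x - y | x y. x \<in> Fl S \<and> y \<in> Fl S} = span ((\<lambda>x. -a + x) ` (S - {a}))"
    (is "?dir = ?T")
proof
  have Fl_eq: "Fl S = (\<lambda>x. a + x) ` ?T"
    using affine_hull_span2[OF assms] by (simp add: Fl_def)
  then show "?dir \<subseteq> ?T"
    using span_diff by fastforce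
  show "?T \<subseteq> ?dir"
  proof
    fix u assume "u \<in> ?T"
    then have "a + u \<in> Fl S" "a + 0 \<in> Fl S"
      using Fl_eq span_zero by blast+
    then show "u \<in> ?dir" by force
  qed
qed

lemma fdim_eq_dim_translate:
  assumes "a \<in> S"
  shows "fdim S = int (dim ((\<lambda>x. -a + x) ` (S - {a})))"
proof -
  have "Fl S \<noteq> {}"
    using assms by (auto simp: Fl_def hull_inc)
  then have "fdim S = int (dim {x - y | x y. x \<in> Fl S \<and> y \<in> Fl S})"
    by (simp only: fdim_def if_False)
  then show ?thesis
    by (simp only: direction_Fl_eq_span[OF assms] dim_span)
qed

lemma fdim_le_card:
  assumes "finite S"
  shows "fdim S \<le> int (card S) - 1"
proof (cases "S = {}")
  case True
  then show ?thesis by (simp add: fdim_def Fl_def)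
next
  case False
  then obtain a where a: "a \<in> S" by blast
  let ?X = "(\<lambda>x. -a + x) ` (S - {a})"
  have "dim ?X \<le> card ?X"
    using assms by (intro dim_le_card') simp
  also have "\<dots> \<le> card (S - {a})"
    using assms by (intro card_image_le) simp
  also have "\<dots> = card S - 1"
    using a assms by simp
  finally have "dim ?X \<le> card S - 1" .
  moreover have "card S > 0"
    using a assms card_gt_0_iff by blast
  ultimately show ?thesis
    using fdim_eq_dim_translate[OF a] by linarith
qed

lemma fdim_image_Diff_le:
  assumes "finite B"
  shows "fdim (f ` (B - C)) \<le> int (card B) - int (card (B \<inter> C)) - 1"
proof -
  have "fdim (f ` (B - C)) \<le> int (card (f ` (B - C))) - 1"
    using assms by (intro fdim_le_card) simp
  moreover have "card (f ` (B - C)) \<le> card (B - C)"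
    using assms by (simp add: card_image_le)
  moreover have "card B = card (B \<inter> C) + card (B - C)"
    using assms by (rule card_Int_Diff)
  ultimately show ?thesis by linarith
qed

lemma dim_less_card_if_notin_span:
  fixes W E :: "'a::real_vector set"
  assumes "finite E" "W \<subseteq> span E" "v \<in> span E" "v \<notin> span W"
  shows "dim W < card E"
proof -
  obtain b where b: "b \<subseteq> W" "independent b" "card b = dim W"
    using basis_exists[of W] by metis
  have "v \<notin> span b"
    using assms(4) span_mono[OF b(1)] by blast
  then have indep: "independent (insert v b)" and "v \<notin> b"
    using independent_insertI[OF _ b(2)] span_base by blast+
  have "insert v b \<subseteq> span E"
    using assms(2,3) b(1) span_base by blast
  then have "finite (insert v b)" "card (insert v b) \<le> card E"
    using independent_span_bound[OF assms(1) indep] by simp_all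
  then show ?thesis
    using \<open>v \<notin> b\<close> b(3) by simp
qed

lemma sum_fun_apply: "(sum f A) x = (\<Sum>a\<in>A. f a x)"
  for f :: "'a \<Rightarrow> 'b \<Rightarrow> 'c::comm_monoid_add"
  by (induction A rule: infinite_finite_induct) auto

lemma supported_in_span_indicators:
  fixes f :: "'a \<Rightarrow> real"
  assumes "finite K" "\<And>k. k \<notin> K \<Longrightarrow> f k = 0"
  shows "f \<in> span ((\<lambda>k. indicator {k}) ` K)"
proof -
  have "f = (\<Sum>k\<in>K. f k *\<^sub>R indicator {k})"
  proof
    fix x
    have "(\<Sum>k\<in>K. f k *\<^sub>R (indicator {k} :: 'a \<Rightarrow> real)) x = (\<Sum>k\<in>K. f k * indicator {k} x)"
      by (simp add: sum_fun_apply scaleR_fun_def)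
    also have "\<dots> = f x"
      using assms by (cases "x \<in> K") (auto simp: indicator_def if_distrib cong: if_cong)
    finally show "f x = (\<Sum>k\<in>K. f k *\<^sub>R (indicator {k} :: 'a \<Rightarrow> real)) x" ..
  qed
  also have "\<dots> \<in> span ((\<lambda>k. indicator {k}) ` K)"
    by (intro span_sum span_scale span_base) auto
  finally show ?thesis .
qed

lemma finite_Iset: "finite (Iset e)"
  by (rule finite_subset[of _ "{0..e} \<times> {0..e}"]) (auto simp: Iset_def)

lemma monomials_le_eq_insert_Iset: "{(i, j). i + j \<le> e} = insert (0, 0) (Iset e)"
  by (auto simp: Iset_def)

lemma card_monomials_le: "card {(i, j). i + j \<le> e} = (e + 2) choose 2"
proof (induction e)
  case 0
  have "{(i, j). i + j \<le> (0::nat)} = {(0, 0)}" by auto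
  then show ?case by (simp add: numeral_2_eq_2)
next
  case (Suc e)
  have split: "{(i, j). i + j \<le> Suc e} = {(i, j). i + j \<le> e} \<union> (\<lambda>i. (i, Suc e - i)) ` {0..Suc e}"
    by auto
  have "finite {(i, j). i + j \<le> e}"
    unfolding monomials_le_eq_insert_Iset using finite_Iset by simp
  moreover have "inj_on (\<lambda>i. (i, Suc e - i)) {0..Suc e}"
    by (auto simp: inj_on_def)
  ultimately have "card {(i, j). i + j \<le> Suc e}
      = card {(i, j). i + j \<le> e} + card ((\<lambda>i. (i, Suc e - i)) ` {0..Suc e})"
    unfolding split by (intro card_Un_disjoint) auto
  also have "\<dots> = ((e + 2) choose 2) + (e + 2)"
    using Suc.IH \<open>inj_on _ _\<close> by (simp add: card_image)
  also have "\<dots> = (Suc e + 2) choose 2"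
    by (simp add: numeral_2_eq_2)
  finally show ?case .
qed

lemma card_Iset: "int (card (Iset e)) = bin2 e - 1"
proof -
  have "card {(i, j). i + j \<le> e} = Suc (card (Iset e))"
    unfolding monomials_le_eq_insert_Iset using finite_Iset by (simp add: Iset_def)
  then show ?thesis
    using card_monomials_le[of e] by (simp add: bin2_def)
qed

lemma psi_eq_0_outside_Iset: "k \<notin> Iset e \<Longrightarrow> psi e p k = 0"
  by (cases k) (auto simp: psi_def)

lemma inj_psi:
  assumes "e \<ge> 1"
  shows "inj (psi e)"
proof (rule injI)
  fix p q assume eq: "psi e p = psi e q"
  have "(1, 0) \<in> Iset e" "(0, 1) \<in> Iset e"
    using assms by (auto simp: Iset_def)
  then have "psi e p (1, 0) = fst p" "psi e p (0, 1) = snd p"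
    "psi e q (1, 0) = fst q" "psi e q (0, 1) = snd q"
    by (auto simp: psi_def)
  then show "p = q"
    using eq by (metis prod.collapse)
qed

section \<open>Curves as preimages of affine hyperplanes\<close>

definition monomial_form :: "(nat \<times> nat \<Rightarrow> real) \<Rightarrow> nat \<Rightarrow> coords \<Rightarrow> real" where
  "monomial_form c e f = (\<Sum>k\<in>Iset e. c k * f k)"

lemma linear_monomial_form: "linear (monomial_form c e)"
  by (rule linearI)
    (auto simp: monomial_form_def sum.distrib scaleR_fun_def sum_distrib_left algebra_simps)

lemma affine_level_set_linear:
  fixes g :: "'a::real_vector \<Rightarrow> real"
  assumes "linear g"
  shows "affine {x. g x = t}"
  unfolding affine_def
proof (intro ballI allI impI)
  fix x y and u v :: real
  assume "x \<in> {x. g x = t}" "y \<in> {x. g x = t}" "u + v = 1"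
  then show "u *\<^sub>R x + v *\<^sub>R y \<in> {x. g x = t}"
    using assms by (simp add: linear_add linear_scale flip: distrib_right)
qed

lemma polynomial_eq_monomial_form:
  "(\<Sum>(i, j)\<in>{(i, j). i + j \<le> e}. c (i, j) * fst p ^ i * snd p ^ j)
     = c (0, 0) + monomial_form c e (psi e p)"
proof -
  have "(\<Sum>(i, j)\<in>{(i, j). i + j \<le> e}. c (i, j) * fst p ^ i * snd p ^ j)
      = c (0, 0) + (\<Sum>(i, j)\<in>Iset e. c (i, j) * fst p ^ i * snd p ^ j)"
    unfolding monomials_le_eq_insert_Iset using finite_Iset by (simp add: Iset_def)
  also have "(\<Sum>(i, j)\<in>Iset e. c (i, j) * fst p ^ i * snd p ^ j) = monomial_form c e (psi e p)"
    unfolding monomial_form_def by (rule sum.cong) (auto simp: psi_def)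
  finally show ?thesis .
qed

lemma curve_of_degreeE:
  assumes "curve_of_degree e C"
  obtains c i j where "i + j = e" "c (i, j) \<noteq> 0"
    "C = psi_pre e {f. monomial_form c e f = - c (0, 0)}"
proof -
  from assms obtain c i j where "i + j = e" "c (i, j) \<noteq> 0"
    and C: "C = {p. (\<Sum>(i, j)\<in>{(i, j). i + j \<le> e}. c (i, j) * fst p ^ i * snd p ^ j) = 0}"
    unfolding curve_of_degree_def by blast
  moreover have "C = psi_pre e {f. monomial_form c e f = - c (0, 0)}"
    unfolding C polynomial_eq_monomial_form psi_pre_def by auto
  ultimately show thesis using that by blast
qed

lemma psi_pre_Ve_subset_curve:
  assumes "curve_of_degree e C" "D \<subseteq> C"
  shows "psi_pre e (Ve e D) \<subseteq> C"
proof -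
  obtain c i j where C: "C = psi_pre e {f. monomial_form c e f = - c (0, 0)}"
    using curve_of_degreeE[OF assms(1)] by metis
  have "psi e ` D \<subseteq> {f. monomial_form c e f = - c (0, 0)}"
    using assms(2) by (auto simp: C psi_pre_def)
  then have "Ve e D \<subseteq> {f. monomial_form c e f = - c (0, 0)}"
    unfolding Ve_def Fl_def
    by (rule hull_minimal) (rule affine_level_set_linear[OF linear_monomial_form])
  then show ?thesis
    by (auto simp: C psi_pre_def)
qed

text \<open>The direction space of psi_e(D) lies in the kernel of the linear form of C, which
  misses the unit vector of a leading monomial; this costs one dimension.\<close>

lemma fdim_psi_subset_curve:
  assumes "e \<ge> 1" "curve_of_degree e C" "D \<subseteq> C"
  shows "fdim (psi e ` D) \<le> bin2 e - 2"
proof (cases "D = {}")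
  case True
  then show ?thesis by (simp add: fdim_def Fl_def bin2_def Suc_le_eq)
next
  case False
  then obtain a where a: "a \<in> D" by blast
  obtain c i j where ij: "i + j = e" "c (i, j) \<noteq> 0"
    and C: "C = psi_pre e {f. monomial_form c e f = - c (0, 0)}"
    using curve_of_degreeE[OF assms(2)] by metis
  let ?X = "(\<lambda>x. - psi e a + x) ` (psi e ` D - {psi e a})"
  define E :: "coords set" where "E = (\<lambda>k. indicator {k}) ` Iset e"
  have "finite E"
    unfolding E_def using finite_Iset by simp
  have "(i, j) \<in> Iset e"
    using ij assms(1) by (simp add: Iset_def)
  then have "indicator {(i, j)} \<in> span E"
    by (auto simp: E_def intro: span_base)
  have "?X \<subseteq> span E"
    unfolding E_def
    by (auto intro!: supported_in_span_indicators finite_Iset simp: psi_eq_0_outside_Iset)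
  have on_C: "monomial_form c e (psi e q) = - c (0, 0)" if "q \<in> D" for q
    using that assms(3) by (auto simp: C psi_pre_def)
  have "monomial_form c e (- psi e a + psi e q) = 0" if "q \<in> D" for q
    using on_C[OF that] on_C[OF a]
    by (simp add: linear_diff[OF linear_monomial_form])
  then have "?X \<subseteq> {f. monomial_form c e f = 0}"
    by blast
  then have "span ?X \<subseteq> {f. monomial_form c e f = 0}"
    by (rule span_minimal) (rule real_vector.linear_subspace_kernel[OF linear_monomial_form])
  moreover have "monomial_form c e (indicator {(i, j)}) = c (i, j)"
    using \<open>(i, j) \<in> Iset e\<close> finite_Iset by (simp add: monomial_form_def indicator_def)
  ultimately have "indicator {(i, j)} \<notin> span ?X"
    using ij(2) by auto
  with \<open>finite E\<close> \<open>?X \<subseteq> span E\<close> \<open>indicator {(i, j)} \<in> span E\<close>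
  have "dim ?X < card E"
    by (rule dim_less_card_if_notin_span)
  moreover have "card E \<le> card (Iset e)"
    unfolding E_def using finite_Iset by (rule card_image_le)
  ultimately show ?thesis
    using fdim_eq_dim_translate[of "psi e a"] a card_Iset[of e] by simp
qed

lemma
  assumes "e \<ge> 1" "curve_of_degree e C" "finite B"
  shows gamma_Int_curve: "gamma e B (B \<inter> C) = card (B \<inter> C)"
    and We_Int_curve: "We d e B (B \<inter> C) = Fl (psi (d - e) ` (B - C))"
    and alpha_Int_curve_nonneg: "alpha e (B \<inter> C) \<ge> 0"
proof -
  have "psi_pre e (Ve e (B \<inter> C)) \<subseteq> C"
    using psi_pre_Ve_subset_curve[OF assms(2)] by blast
  moreover have "psi e ` (B \<inter> C) \<subseteq> Ve e (B \<inter> C)"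
    by (auto simp: Ve_def Fl_def hull_inc)
  ultimately have Ve_psi: "Ve e (B \<inter> C) \<inter> psi e ` B = psi e ` (B \<inter> C)"
    and pre: "B - psi_pre e (Ve e (B \<inter> C)) = B - C"
    by (auto simp: psi_pre_def)
  show "gamma e B (B \<inter> C) = card (B \<inter> C)"
    using inj_psi[OF assms(1)] by (simp add: gamma_def Ve_psi card_image inj_on_subset)
  show "We d e B (B \<inter> C) = Fl (psi (d - e) ` (B - C))"
    by (simp add: We_def pre)
  show "alpha e (B \<inter> C) \<ge> 0"
    using fdim_psi_subset_curve[OF assms(1,2)] by (simp add: alpha_def)
qed

lemma curve_section_bounds:
  fixes B C0 :: "point set"
  assumes "finite B" "int (card B) = bin2 d - 3"
    and iv: "\<forall>(e, D)\<in>Iidx d B C0. max (tau d e B D) (mu d e B D) < bin2 d"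
    and v: "\<forall>(e, D)\<in>({1..d-1} \<times> Pow B) - Iidx d B C0. alpha e D \<ge> 0 \<longrightarrow>
           int (gamma e B D) < bin2 d - bin2 (d - e) \<and> beta d e B D < 0"
    and e: "e \<in> {1..d-1}" and C: "curve_of_degree e C"
  shows "int (card (B \<inter> C)) < bin2 d - bin2 (d - e) \<and>
     (fdim (psi (d - e) ` (B - C)) > bin2 (d - e) - 3 \<or>
      int (card (B \<inter> C)) = bin2 d - bin2 (d - e) - 1 \<and>
      fdim (psi (d - e) ` (B - C)) = bin2 (d - e) - 3)"
proof -
  let ?D = "B \<inter> C"
  have e1: "e \<ge> 1" using e by simp
  note gamma = gamma_Int_curve[OF e1 C \<open>finite B\<close>]
  note alpha = alpha_Int_curve_nonneg[OF e1 C \<open>finite B\<close>]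
  have beta: "beta d e B ?D = bin2 (d - e) - 3 - fdim (psi (d - e) ` (B - C))"
    by (simp add: beta_def We_Int_curve[OF e1 C \<open>finite B\<close>] fdim_Fl)
  show ?thesis
  proof (cases "(e, ?D) \<in> Iidx d B C0")
    case False
    with e have "(e, ?D) \<in> ({1..d-1} \<times> Pow B) - Iidx d B C0"
      by blast
    from bspec[OF v this] alpha
    have "int (gamma e B ?D) < bin2 d - bin2 (d - e) \<and> beta d e B ?D < 0"
      by simp
    then show ?thesis
      using gamma beta by simp
  next
    case True
    from bspec[OF iv this] have max: "max (tau d e B ?D) (mu d e B ?D) < bin2 d"
      by simp
    then have card: "int (card ?D) < bin2 d - bin2 (d - e)"
      using alpha gamma by (simp add: mu_def)
    show ?thesis
    proof (cases "beta d e B ?D < 0")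
      case True
      then show ?thesis
        using card beta by simp
    next
      case False
      have "int (card ?D) = bin2 d - bin2 (d - e) - 1 \<and> beta d e B ?D = 0"
        using max False card alpha gamma assms(2) unfolding tau_def by (auto split: if_splits)
      then show ?thesis
        using card beta by simp
    qed
  qed
qed

theorem lemma23:
  fixes d :: nat and A C0 B0 B :: "(real \<times> real) set"
  assumes "d \<ge> 1"
    and "B0 \<subseteq> A - C0"
    and "B \<subseteq> A" and "finite B" and "int (card B) = bin2 d - 3"
    and "fdim (psi d ` B) = bin2 d - 4"
    and "B0 \<subseteq> B"
    and "B \<inter> C0 = B - B0"
    and "\<forall>(e, D)\<in>Iidx d B C0. max (tau d e B D) (mu d e B D) < bin2 d"
    and "\<forall>(e, D)\<in>({1..d-1} \<times> Pow B) - Iidx d B C0. alpha e D \<ge> 0 \<longrightarrow>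
           int (gamma e B D) < bin2 d - bin2 (d - e) \<and> beta d e B D < 0"
  shows "B \<in> Nd3 d A B0 C0"
  unfolding Nd3_def Nd_def
proof (intro CollectI conjI ballI allI impI)
  fix e C assume e: "e \<in> {1..d-1}" and C: "curve_of_degree e C"
  note bounds = curve_section_bounds[OF assms(4,5,9,10) e C]
  note dim_bound = fdim_image_Diff_le[OF assms(4), of "psi (d - e)" C]
  show "int (card (B \<inter> C)) < bin2 d - bin2 (d - e)"
    using bounds by simp
  show "fdim (psi (d - e) ` (B - C)) = bin2 (d - e) - 3"
    if "int (card (B \<inter> C)) = bin2 d - bin2 (d - e) - 1"
    using that bounds dim_bound assms(5) by linarith
  show "fdim (psi (d - e) ` (B - C)) > bin2 (d - e) - 3"
    if "int (card (B \<inter> C)) < bin2 d - bin2 (d - e) - 1"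
    using that bounds by linarith
qed (simp_all add: assms(3-8))

end
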